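(* Let $n\ge 3$ be odd and let $C$ be a Greene–Kleitman chain in $Q_{n-2}$ with $|C|=1$. Put $L:=\ell( *C* )$ and $F:=f( *C* )$ (chains in $Q_n$). Then the bottom end of $L$ is adjacent in $Q_n$ to the top end of $F$, and the chains $*L*$ and $f( *F* )$ are connected at their bottom ends in $Q_{n+2}$. Specifically, if $C=u*v$ with $u,v\in D$, then $L=*\,u\,0\,v\,1$, $*L*=*\,*\,u\,0\,v\,1\,*$, $F=0\,u\,1\,v\,*$, and $f( *F* )=0\,0\,u\,1\,v\,1\,*$; i.e., $L$ and $F$ differ in exactly three positions, and $*L*$ and $f( *F* )$ differ in exactly three positions.
   Context: $Q_n$ is the hypercube on $\{0,1\}^n$. Let $D$ be the set of bitstrings (including the empty string) with equally many $0$s and $1$s such that every prefix has at least as many $0$s as $1$s. A Greene–Kleitman chain in $Q_n$ is a string of length $n$ over $\{0,1,*\}$ of the form $u_0*u_1*\cdots*u_{h-1}*u_h$ with all $u_j\in D$, representing the path whose vertices are obtained by replacing the $*$s by $i$ ones followed by $h-i$ zeros; $|C|=h$ is its number of $*$s. Its bottom end is obtained by replacing all $*$s by $0$, its top end by replacing all $*$s by $1$. For a string $C$ over $\{0,1,*\}$ with at least two $*$s, $f(C)$ (resp. $\ell(C)$) is obtained by replacing the first two (resp. last two) $*$s by $0$ and $1$, respectively. Juxtaposition denotes concatenation. Two chains are connected at their bottom ends if their bottom ends differ in exactly one position. *)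

theory Defs
  imports Main
begin

datatype sym = Zero | One | Star

definition cnt :: "sym \<Rightarrow> sym list \<Rightarrow> nat" where
  "cnt a w = length (filter (\<lambda>x. x = a) w)"

definition inD :: "sym list \<Rightarrow> bool" where
  "inD w \<longleftrightarrow> set w \<subseteq> {Zero, One} \<and> cnt Zero w = cnt One w \<and>
     (\<forall>k \<le> length w. cnt One (take k w) \<le> cnt Zero (take k w))"

fun join_star :: "sym list list \<Rightarrow> sym list" where
  "join_star [] = []"
| "join_star [u] = u"
| "join_star (u # us) = u @ [Star] @ join_star us"

definition GK_chain :: "nat \<Rightarrow> sym list \<Rightarrow> bool" where
  "GK_chain m C \<longleftrightarrow> length C = m \<and>
     (\<exists>us. us \<noteq> [] \<and> (\<forall>u\<in>set us. inD u) \<and> C = join_star us)"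

definition nstars :: "sym list \<Rightarrow> nat" where
  "nstars C = cnt Star C"

fun rep_first :: "sym \<Rightarrow> sym list \<Rightarrow> sym list" where
  "rep_first a [] = []"
| "rep_first a (x # xs) = (if x = Star then a # xs else x # rep_first a xs)"

text \<open>f: replace the first two stars by 0 and 1; ell: the last two stars by 0 and 1.\<close>
definition fC :: "sym list \<Rightarrow> sym list" where
  "fC C = rep_first One (rep_first Zero C)"

definition ellC :: "sym list \<Rightarrow> sym list" where
  "ellC C = rev (rep_first Zero (rep_first One (rev C)))"

definition bottom :: "sym list \<Rightarrow> sym list" where
  "bottom C = map (\<lambda>x. if x = Star then Zero else x) C"

definition top :: "sym list \<Rightarrow> sym list" where
  "top C = map (\<lambda>x. if x = Star then One else x) C"

definition ndiff :: "sym list \<Rightarrow> sym list \<Rightarrow> nat" where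
  "ndiff x y = card {i. i < length x \<and> x ! i \<noteq> y ! i}"

definition adjacent :: "sym list \<Rightarrow> sym list \<Rightarrow> bool" where
  "adjacent x y \<longleftrightarrow> length x = length y \<and> ndiff x y = 1"

definition connected_bottom :: "sym list \<Rightarrow> sym list \<Rightarrow> bool" where
  "connected_bottom X Y \<longleftrightarrow> adjacent (bottom X) (bottom Y)"

end

theory Submission
  imports Defs
begin

text \<open>A chain with one star has the shape \<open>u * v\<close> with \<open>u, v \<in> D\<close>, and since words
  in \<open>D\<close> contain no stars, \<open>f\<close> and \<open>\<ell>\<close> act on the padded chains at explicitly known
  positions. This gives closed forms for \<open>L\<close>, \<open>F\<close> and \<open>f(*F*)\<close>, and comparing them
  position by position leaves exactly the three differences claimed (resp. one
  difference after replacing stars by \<open>0\<close> or \<open>1\<close>).\<close>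

lemma inD_Star_notin: "inD u \<Longrightarrow> Star \<notin> set u"
  unfolding inD_def by auto

lemma cnt_append: "cnt a (x @ y) = cnt a x + cnt a y"
  unfolding cnt_def by simp

lemma cnt_Star_notin: "Star \<notin> set u \<Longrightarrow> cnt Star u = 0"
  unfolding cnt_def by (auto simp: filter_empty_conv)

lemma cnt_Star_join_star:
  assumes "us \<noteq> []" and "\<forall>u\<in>set us. Star \<notin> set u"
  shows "cnt Star (join_star us) = length us - 1"
  using assms
  by (induction us rule: join_star.induct)
    (simp_all add: cnt_append cnt_Star_notin, simp add: cnt_def)

lemma GK_chain_one_star_obtain:
  assumes "GK_chain m C" and "nstars C = 1"
  obtains u v where "inD u" "inD v" "C = u @ [Star] @ v"
proof -
  obtain us where us: "us \<noteq> []" "\<forall>u\<in>set us. inD u" "C = join_star us"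
    using assms(1) unfolding GK_chain_def by blast
  then have "length us = 2"
    using assms(2) cnt_Star_join_star[of us] inD_Star_notin
    unfolding nstars_def by fastforce
  then obtain u v where "us = [u, v]"
    by (auto simp: numeral_2_eq_2 length_Suc_conv)
  with us show ?thesis by (intro that) auto
qed

lemma rep_first_append: "Star \<notin> set w \<Longrightarrow> rep_first a (w @ r) = w @ rep_first a r"
  by (induction w) auto

lemma fC_Star_Star:
  "Star \<notin> set w \<Longrightarrow> fC ([Star] @ w @ [Star] @ r) = [Zero] @ w @ [One] @ r"
  by (simp add: fC_def rep_first_append)

lemma ellC_Star_Star:
  "Star \<notin> set w \<Longrightarrow> ellC (r @ [Star] @ w @ [Star]) = r @ [Zero] @ w @ [One]"
  by (simp add: ellC_def rep_first_append)

lemma bottom_simps [simp]: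
  "bottom [] = []"
  "bottom (a # w) = (if a = Star then Zero else a) # bottom w"
  "bottom (x @ y) = bottom x @ bottom y"
  by (simp_all add: bottom_def)

lemma top_simps [simp]:
  "top [] = []"
  "top (a # w) = (if a = Star then One else a) # top w"
  "top (x @ y) = top x @ top y"
  by (simp_all add: top_def)

lemma bottom_Star_notin: "Star \<notin> set w \<Longrightarrow> bottom w = w"
  unfolding bottom_def by (rule map_idI) auto

lemma top_Star_notin: "Star \<notin> set w \<Longrightarrow> top w = w"
  unfolding top_def by (rule map_idI) auto

lemma ndiff_Nil [simp]: "ndiff [] y = 0"
  by (simp add: ndiff_def)

lemma ndiff_Cons [simp]: "ndiff (a # x) (b # y) = (if a = b then 0 else 1) + ndiff x y"
proof -
  let ?D = "{i. i < length x \<and> x ! i \<noteq> y ! i}"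
  have "{i. i < length (a # x) \<and> (a # x) ! i \<noteq> (b # y) ! i}
      = (if a = b then {} else {0}) \<union> Suc ` ?D"
    by (auto simp: less_Suc_eq_0_disj)
  also have "card \<dots> = (if a = b then 0 else 1) + card ?D"
    by (simp add: card_image)
  finally show ?thesis
    unfolding ndiff_def .
qed

lemma ndiff_self [simp]: "ndiff x x = 0"
  by (induction x) auto

lemma ndiff_append:
  "length x = length y \<Longrightarrow> ndiff (x @ x') (y @ y') = ndiff x y + ndiff x' y'"
proof (induction x arbitrary: y)
  case (Cons a x)
  then show ?case by (cases y) auto
qed simp

theorem lemma22:
  fixes n :: nat and C :: "sym list"
  assumes "n \<ge> 3" and "odd n" and "GK_chain (n - 2) C" and "nstars C = 1"
  defines "L \<equiv> ellC ([Star] @ C @ [Star])" and "F \<equiv> fC ([Star] @ C @ [Star])"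
  shows "adjacent (bottom L) (top F)
    \<and> connected_bottom ([Star] @ L @ [Star]) (fC ([Star] @ F @ [Star]))
    \<and> (\<forall>u v. inD u \<longrightarrow> inD v \<longrightarrow> C = u @ [Star] @ v \<longrightarrow>
          L = [Star] @ u @ [Zero] @ v @ [One]
        \<and> [Star] @ L @ [Star] = [Star, Star] @ u @ [Zero] @ v @ [One, Star]
        \<and> F = [Zero] @ u @ [One] @ v @ [Star]
        \<and> fC ([Star] @ F @ [Star]) = [Zero, Zero] @ u @ [One] @ v @ [One, Star])
    \<and> length L = length F \<and> ndiff L F = 3
    \<and> length ([Star] @ L @ [Star]) = length (fC ([Star] @ F @ [Star]))
    \<and> ndiff ([Star] @ L @ [Star]) (fC ([Star] @ F @ [Star])) = 3"
proof -
  have closed_forms: "L = [Star] @ u @ [Zero] @ v @ [One]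
      \<and> F = [Zero] @ u @ [One] @ v @ [Star]
      \<and> fC ([Star] @ F @ [Star]) = [Zero, Zero] @ u @ [One] @ v @ [One, Star]"
    if "Star \<notin> set u" "Star \<notin> set v" "C = u @ [Star] @ v" for u v
    using that ellC_Star_Star[of v "[Star] @ u"] fC_Star_Star[of u "v @ [Star]"]
      fC_Star_Star[of "[Zero] @ u @ [One] @ v" "[Star]"]
    by (simp add: L_def F_def)
  text \<open>The hypotheses on \<open>n\<close> only fix the length of \<open>C\<close>; the computation does not need them.\<close>
  obtain u v where uv: "inD u" "inD v" "C = u @ [Star] @ v"
    using GK_chain_one_star_obtain assms(3,4) .
  then have u: "Star \<notin> set u" and v: "Star \<notin> set v"
    by (simp_all add: inD_Star_notin)
  have L: "L = [Star] @ u @ [Zero] @ v @ [One]" and F: "F = [Zero] @ u @ [One] @ v @ [Star]"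
    and fF: "fC ([Star] @ F @ [Star]) = [Zero, Zero] @ u @ [One] @ v @ [One, Star]"
    using closed_forms[OF u v uv(3)] by blast+
  have "adjacent (bottom L) (top F)"
    unfolding adjacent_def L F using u v
    by (simp add: bottom_Star_notin top_Star_notin ndiff_append)
  moreover have "connected_bottom ([Star] @ L @ [Star]) (fC ([Star] @ F @ [Star]))"
    unfolding connected_bottom_def adjacent_def fF L using u v
    by (simp add: bottom_Star_notin ndiff_append)
  moreover have "ndiff L F = 3" "ndiff ([Star] @ L @ [Star]) (fC ([Star] @ F @ [Star])) = 3"
    unfolding fF unfolding L F by (simp_all add: ndiff_append)
  moreover have "length L = length F"
    "length ([Star] @ L @ [Star]) = length (fC ([Star] @ F @ [Star]))"
    unfolding fF unfolding L F by simp_all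
  ultimately show ?thesis
    using closed_forms inD_Star_notin by auto
qed

end
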